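(* Let $\mathfrak N$ be a two-step nilpotent Lie algebra of type $(2,q)$ with no Euclidean de Rham factor, i.e. $[\mathfrak N,\mathfrak N]$ equals the center of $\mathfrak N$. If $\mathfrak N$ is a non-Einstein nilradical, then $\mathfrak N$ is indecomposable.
   Context: Type $(p,q)$: $\dim[\mathfrak N,\mathfrak N]=p$ and $\dim\mathfrak N-p=q$. A nilpotent Lie algebra is an Einstein nilradical if it admits an inner product whose Ricci operator equals $\lambda\mathrm{Id}+D$ for some $\lambda\in\mathbb R$ and some symmetric derivation $D$; otherwise it is a non-Einstein nilradical. Indecomposable means not a direct sum of two nonzero ideals. *)

theory Defs
  imports "HOL-Analysis.Analysis"
begin

text \<open>A finite-dimensional real Lie algebra is modelled by a bracket on a
  finite-dimensional real vector space (a type of class euclidean_space; its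
  built-in inner product is NOT used anywhere below).\<close>

definition lie_algebra :: "('a::euclidean_space \<Rightarrow> 'a \<Rightarrow> 'a) \<Rightarrow> bool" where
  "lie_algebra br \<longleftrightarrow>
     (\<forall>x. linear (br x)) \<and> (\<forall>y. linear (\<lambda>x. br x y)) \<and>
     (\<forall>x. br x x = 0) \<and>
     (\<forall>x y z. br x (br y z) + br y (br z x) + br z (br x y) = 0)"

definition derived_algebra :: "('a::euclidean_space \<Rightarrow> 'a \<Rightarrow> 'a) \<Rightarrow> 'a set" where
  "derived_algebra br = span {br x y | x y. True}"

definition lie_center :: "('a::euclidean_space \<Rightarrow> 'a \<Rightarrow> 'a) \<Rightarrow> 'a set" where
  "lie_center br = {z. \<forall>x. br z x = 0}"

definition two_step_nilpotent :: "('a::euclidean_space \<Rightarrow> 'a \<Rightarrow> 'a) \<Rightarrow> bool" where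
  "two_step_nilpotent br \<longleftrightarrow> lie_algebra br \<and> derived_algebra br \<noteq> {0} \<and>
     (\<forall>x y z. br x (br y z) = 0)"

definition lie_type :: "('a::euclidean_space \<Rightarrow> 'a \<Rightarrow> 'a) \<Rightarrow> nat \<Rightarrow> nat \<Rightarrow> bool" where
  "lie_type br p q \<longleftrightarrow> dim (derived_algebra br) = p \<and> DIM('a) - p = q"

definition inner_product :: "('a::euclidean_space \<Rightarrow> 'a \<Rightarrow> real) \<Rightarrow> bool" where
  "inner_product ip \<longleftrightarrow> (\<forall>x. linear (ip x)) \<and> (\<forall>x y. ip x y = ip y x) \<and>
     (\<forall>x. x \<noteq> 0 \<longrightarrow> ip x x > 0)"

definition orthonormal_basis :: "('a::euclidean_space \<Rightarrow> 'a \<Rightarrow> real) \<Rightarrow> 'a list \<Rightarrow> bool" where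
  "orthonormal_basis ip es \<longleftrightarrow> length es = DIM('a) \<and>
     (\<forall>i<length es. \<forall>j<length es. ip (es!i) (es!j) = (if i = j then 1 else 0))"

definition lie_derivation :: "('a::euclidean_space \<Rightarrow> 'a \<Rightarrow> 'a) \<Rightarrow> ('a \<Rightarrow> 'a) \<Rightarrow> bool" where
  "lie_derivation br D \<longleftrightarrow> linear D \<and> (\<forall>x y. D (br x y) = br (D x) y + br x (D y))"

text \<open>Ricci operator of the nilpotent metric Lie algebra (N, ip), given through
  ip (Ric X) Y = -1/2 sum_i ip [X,e_i] [Y,e_i] + 1/4 sum_{i,j} ip [e_i,e_j] X * ip [e_i,e_j] Y
  for an orthonormal basis (e_i).\<close>
definition ricci_form :: "('a::euclidean_space \<Rightarrow> 'a \<Rightarrow> 'a) \<Rightarrow> ('a \<Rightarrow> 'a \<Rightarrow> real) \<Rightarrow> 'a list \<Rightarrow> 'a \<Rightarrow> 'a \<Rightarrow> real" where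
  "ricci_form br ip es X Y =
     - (1/2) * (\<Sum>i<length es. ip (br X (es!i)) (br Y (es!i)))
     + (1/4) * (\<Sum>i<length es. \<Sum>j<length es. ip (br (es!i) (es!j)) X * ip (br (es!i) (es!j)) Y)"

definition einstein_nilradical :: "('a::euclidean_space \<Rightarrow> 'a \<Rightarrow> 'a) \<Rightarrow> bool" where
  "einstein_nilradical br \<longleftrightarrow>
     (\<exists>ip es lam D. inner_product ip \<and> orthonormal_basis ip es \<and>
        lie_derivation br D \<and> (\<forall>x y. ip (D x) y = ip x (D y)) \<and>
        (\<forall>X Y. ricci_form br ip es X Y = ip (lam *\<^sub>R X + D X) Y))"

definition lie_ideal :: "('a::euclidean_space \<Rightarrow> 'a \<Rightarrow> 'a) \<Rightarrow> 'a set \<Rightarrow> bool" where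
  "lie_ideal br I \<longleftrightarrow> subspace I \<and> (\<forall>x y. y \<in> I \<longrightarrow> br x y \<in> I)"

definition indecomposable :: "('a::euclidean_space \<Rightarrow> 'a \<Rightarrow> 'a) \<Rightarrow> bool" where
  "indecomposable br \<longleftrightarrow>
     \<not> (\<exists>I J. lie_ideal br I \<and> lie_ideal br J \<and> I \<noteq> {0} \<and> J \<noteq> {0} \<and>
            I \<inter> J = {0} \<and> {x + y | x y. x \<in> I \<and> y \<in> J} = UNIV)"

end

theory Submission
  imports Defs
begin

text \<open>
  Let N be two-step nilpotent of type (2,q) with centre equal to [N,N], and suppose
  N = I \<oplus> J with nonzero ideals I, J. We show that N is then an Einstein nilradical,
  which proves the theorem by contraposition.

  Brackets between I and J vanish, so [N,N] = [I,I] \<oplus> [J,J], and since the centre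
  of N is [N,N], the centre of each ideal lies in its own derived algebra. Hence both
  derived algebras are nonzero, so each is one-dimensional, spanned by some z. An
  alternating form with values in span {z} that is nondegenerate modulo z admits a
  symplectic basis, so I and J are Heisenberg algebras of dimensions 2m+1 and 2k+1
  (a "Heisenberg frame"). Finally, declaring the union of both frames, with the centres
  rescaled by sqrt (k+2) and sqrt (m+2), to be orthonormal gives Ric = \<lambda> Id + D for an
  explicit diagonal derivation D, which we verify on basis vectors.
\<close>

section \<open>Linear algebra\<close>

lemma bracket_antisym:
  fixes b :: "'a::euclidean_space \<Rightarrow> 'a \<Rightarrow> 'a"
  assumes lin1: "\<And>x. linear (b x)" and lin2: "\<And>y. linear (\<lambda>x. b x y)"
    and alt: "\<And>x. b x x = 0"
  shows "b x y = - b y x"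
proof -
  have "b (x + y) (x + y) = b x x + b x y + b y x + b y y"
    using linear_add[OF lin1, of "x + y"] linear_add[OF lin2, of y x] linear_add[OF lin2, of x x y]
    by (simp add: algebra_simps)
  then show ?thesis using alt[of "x + y"] alt[of x] alt[of y] by (simp add: eq_neg_iff_add_eq_0)
qed

lemma bilinear_eq_on_spanning_set:
  fixes f g :: "'a::euclidean_space \<Rightarrow> 'a \<Rightarrow> 'b::real_vector"
  assumes "\<And>x. linear (f x)" "\<And>y. linear (\<lambda>x. f x y)" "\<And>x. linear (g x)" "\<And>y. linear (\<lambda>x. g x y)"
    and "span B = UNIV" and "\<And>a b. a \<in> B \<Longrightarrow> b \<in> B \<Longrightarrow> f a b = g a b"
  shows "f x y = g x y"
proof -
  have "f a y = g a y" if "a \<in> B" for a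
    using real_vector.linear_eq_on_span[OF assms(1)[of a] assms(3)[of a], of B y] assms(5,6) that by auto
  then show ?thesis
    using real_vector.linear_eq_on_span[OF assms(2)[of y] assms(4)[of y], of B x] assms(5) by auto
qed

lemma subspace_dim_one:
  fixes S :: "'a::euclidean_space set"
  assumes "subspace S" "dim S = 1"
  obtains z where "z \<noteq> 0" "S = span {z}"
proof -
  obtain B where B: "B \<subseteq> S" "independent B" "S \<subseteq> span B" "card B = dim S" by (rule basis_exists)
  then obtain z where z: "B = {z}" using assms(2) by (metis card_1_singletonE)
  have "z \<noteq> 0" using B(2) z dependent_zero by blast
  moreover have "S = span {z}" using B z assms(1) by (metis span_subspace)
  ultimately show ?thesis using that by blast
qed

lemma functional_separating:
  fixes S :: "'a::euclidean_space set"
  assumes "subspace S" "v \<notin> S"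
  obtains \<phi> :: "'a \<Rightarrow> real" where "linear \<phi>" "\<phi> v = 1" "\<And>w. w \<in> S \<Longrightarrow> \<phi> w = 0"
proof -
  obtain y z where y: "y \<in> span S" and z: "\<And>w. w \<in> span S \<Longrightarrow> orthogonal z w" and v: "v = y + z"
    using orthogonal_subspace_decomp_exists[of S v] by blast
  have spS: "span S = S" using assms(1) by (simp add: span_eq_iff)
  have "z \<noteq> 0" using v y assms(2) spS by auto
  then have zz: "inner z z \<noteq> 0" by simp
  define \<phi> where "\<phi> w = inner w z / inner z z" for w
  have "linear \<phi>" unfolding \<phi>_def by (rule linearI) (simp_all add: inner_add_left add_divide_distrib)
  moreover have "\<phi> v = 1" unfolding \<phi>_def v using z[OF y] zz
    by (simp add: inner_add_left inner_add_right orthogonal_def inner_commute)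
  moreover have "\<phi> w = 0" if "w \<in> S" for w
    unfolding \<phi>_def using z that spS by (auto simp: orthogonal_def inner_commute)
  ultimately show ?thesis using that by blast
qed

lemma independent_if_dual_functionals:
  fixes v :: "'k \<Rightarrow> 'a::euclidean_space"
  assumes fin: "finite K"
    and dual: "\<And>a. a \<in> K \<Longrightarrow> \<exists>\<phi> :: 'a \<Rightarrow> real. linear \<phi> \<and> \<phi> (v a) \<noteq> 0 \<and> (\<forall>b\<in>K. b \<noteq> a \<longrightarrow> \<phi> (v b) = 0)"
  shows "inj_on v K" "independent (v ` K)"
proof -
  show inj: "inj_on v K"
  proof (rule inj_onI, rule ccontr)
    fix a b assume "a \<in> K" "b \<in> K" "v a = v b" "a \<noteq> b"
    then show False using dual[of a] by force
  qed
  show "independent (v ` K)"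
  proof
    assume "dependent (v ` K)"
    then obtain u where u: "\<exists>w\<in>v ` K. u w \<noteq> 0" "(\<Sum>w\<in>v ` K. u w *\<^sub>R w) = 0"
      using dependent_finite[of "v ` K"] fin by auto
    then obtain a where a: "a \<in> K" "u (v a) \<noteq> 0" by auto
    obtain \<phi> :: "'a \<Rightarrow> real" where \<phi>: "linear \<phi>" "\<phi> (v a) \<noteq> 0" "\<forall>b\<in>K. b \<noteq> a \<longrightarrow> \<phi> (v b) = 0"
      using dual[OF a(1)] by blast
    have "0 = \<phi> (\<Sum>w\<in>v ` K. u w *\<^sub>R w)" using u(2) linear_0[OF \<phi>(1)] by simp
    also have "\<dots> = (\<Sum>b\<in>K. u (v b) * \<phi> (v b))"
      by (simp add: linear_sum[OF \<phi>(1)] linear_scale[OF \<phi>(1)] sum.reindex[OF inj])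
    also have "\<dots> = u (v a) * \<phi> (v a)"
      using \<phi>(3) a(1) fin by (simp add: sum.remove)
    finally show False using a(2) \<phi>(2) by simp
  qed
qed

section \<open>Symplectic bases and Heisenberg frames\<close>

definition symplectic_family :: "('a::zero \<Rightarrow> 'a \<Rightarrow> 'a) \<Rightarrow> 'a \<Rightarrow> nat \<Rightarrow> (nat \<Rightarrow> 'a) \<Rightarrow> (nat \<Rightarrow> 'a) \<Rightarrow> bool" where
  "symplectic_family b z m xs ys \<longleftrightarrow>
     (\<forall>p<m. \<forall>q<m. b (xs p) (ys q) = (if p = q then z else 0) \<and> b (xs p) (xs q) = 0 \<and> b (ys p) (ys q) = 0)"

text \<open>Splitting off a hyperbolic pair: if \<open>b x y = z\<close> for \<open>x, y \<in> W\<close>, the \<open>b\<close>-orthogonal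
  complement \<open>W'\<close> of \<open>x, y\<close> in \<open>W\<close> is a smaller subspace on which \<open>b\<close> is still nondegenerate,
  and \<open>W = span {x, y} + W'\<close> via the projection \<open>u \<mapsto> u - \<omega>(x,u) y + \<omega>(y,u) x\<close>.\<close>
lemma hyperbolic_complement:
  fixes b :: "'a::euclidean_space \<Rightarrow> 'a \<Rightarrow> 'a" and z :: 'a
  assumes lin1: "\<And>x. linear (b x)" and lin2: "\<And>y. linear (\<lambda>x. b x y)"
    and alt: "\<And>x. b x x = 0" and z: "z \<noteq> 0"
    and sub: "subspace W" and val: "\<forall>x\<in>W. \<forall>y\<in>W. b x y \<in> span {z}"
    and nondeg: "\<forall>x\<in>W. x \<noteq> 0 \<longrightarrow> (\<exists>y\<in>W. b x y \<noteq> 0)"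
    and x: "x \<in> W" and y: "y \<in> W" and bxy: "b x y = z"
  defines "W' \<equiv> {w\<in>W. b x w = 0 \<and> b y w = 0}"
  shows "subspace W'" "dim W' < dim W" "\<forall>w\<in>W'. w \<noteq> 0 \<longrightarrow> (\<exists>u\<in>W'. b w u \<noteq> 0)"
    "W \<subseteq> span (insert x (insert y W'))"
proof -
  have anti: "b u v = - b v u" for u v using bracket_antisym[OF lin1 lin2 alt] .
  have byx: "b y x = - z" using anti[of y x] bxy by simp
  have lin_sum: "b w (u + c *\<^sub>R v + d *\<^sub>R t) = b w u + c *\<^sub>R b w v + d *\<^sub>R b w t" for w u v t c d
    by (simp add: linear_add[OF lin1] linear_scale[OF lin1])
  define om where "om u v = inner (b u v) z / inner z z" for u v
  have om: "b u v = om u v *\<^sub>R z" if uv: "u \<in> W" "v \<in> W" for u v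
  proof -
    obtain c where "b u v = c *\<^sub>R z" using val uv by (auto simp: span_singleton)
    then show ?thesis using z by (simp add: om_def)
  qed
  show subW': "subspace W'"
    using sub linear_add[OF lin1] linear_scale[OF lin1] linear_0[OF lin1]
    unfolding W'_def subspace_def by auto
  have perp: "b x v = 0" "b y v = 0" "b v x = 0" "b v y = 0" if "v \<in> W'" for v
    using that anti[of v x] anti[of v y] by (auto simp: W'_def)
  show "dim W' < dim W"
  proof (rule dim_psubset)
    have "W' \<subseteq> W" "x \<notin> W'" using byx z by (auto simp: W'_def)
    then show "span W' \<subset> span W" using x subW' sub by (metis psubsetI span_eq_iff)
  qed
  define pr where "pr u = u - om x u *\<^sub>R y + om y u *\<^sub>R x" for u
  have prW': "pr u \<in> W'" if u: "u \<in> W" for u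
  proof -
    have "pr u \<in> W" unfolding pr_def using sub u x y
      by (intro subspace_add subspace_diff subspace_scale) auto
    moreover have "b x (pr u) = 0" "b y (pr u) = 0"
      using lin_sum[of _ u "- om x u" y "om y u" x] om[OF x u] om[OF y u] bxy byx alt
      by (simp_all add: pr_def)
    ultimately show ?thesis by (simp add: W'_def)
  qed
  show "\<forall>w\<in>W'. w \<noteq> 0 \<longrightarrow> (\<exists>u\<in>W'. b w u \<noteq> 0)"
  proof (intro ballI impI)
    fix w assume w: "w \<in> W'" "w \<noteq> 0"
    then obtain u where u: "u \<in> W" "b w u \<noteq> 0" using nondeg by (auto simp: W'_def)
    have "b w (pr u) = b w u"
      using perp[OF w(1)] lin_sum[of w u "- om x u" y "om y u" x] by (simp add: pr_def)
    then show "\<exists>u\<in>W'. b w u \<noteq> 0" using prW'[OF u(1)] u(2) by metis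
  qed
  show "W \<subseteq> span (insert x (insert y W'))"
  proof
    fix u assume u: "u \<in> W"
    have "pr u \<in> span (insert x (insert y W'))" "x \<in> span (insert x (insert y W'))"
      "y \<in> span (insert x (insert y W'))"
      by (rule span_base, simp add: prW'[OF u])+
    moreover have "u = pr u + om x u *\<^sub>R y - om y u *\<^sub>R x" by (simp add: pr_def)
    ultimately show "u \<in> span (insert x (insert y W'))" by (metis span_add span_diff span_scale)
  qed
qed

lemma symplectic_basis:
  fixes b :: "'a::euclidean_space \<Rightarrow> 'a \<Rightarrow> 'a" and z :: 'a
  assumes lin1: "\<And>x. linear (b x)" and lin2: "\<And>y. linear (\<lambda>x. b x y)"
    and alt: "\<And>x. b x x = 0" and z: "z \<noteq> 0"
    and "subspace W" and "\<forall>x\<in>W. \<forall>y\<in>W. b x y \<in> span {z}"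
    and "\<forall>x\<in>W. x \<noteq> 0 \<longrightarrow> (\<exists>y\<in>W. b x y \<noteq> 0)"
  shows "\<exists>m xs ys. (\<forall>p<m. xs p \<in> W \<and> ys p \<in> W) \<and> symplectic_family b z m xs ys \<and>
           W \<subseteq> span (xs ` {..<m} \<union> ys ` {..<m})"
  using assms(5-7)
proof (induction "dim W" arbitrary: W rule: less_induct)
  case less
  note sub = less.prems(1) and val = less.prems(2) and nondeg = less.prems(3)
  show ?case
  proof (cases "W \<subseteq> {0}")
    case True
    then show ?thesis by (intro exI[of _ 0]) (auto simp: symplectic_family_def)
  next
    case False
    then obtain x y0 where x: "x \<in> W" "x \<noteq> 0" and y0: "y0 \<in> W" "b x y0 \<noteq> 0"
      using nondeg by blast
    obtain c where c: "b x y0 = c *\<^sub>R z" using val x(1) y0(1) by (auto simp: span_singleton)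
    define y where "y = y0 /\<^sub>R c"
    have y: "y \<in> W" using y0 sub by (simp add: y_def subspace_scale)
    have bxy: "b x y = z" using c y0(2) by (simp add: y_def linear_scale[OF lin1])
    define W' where "W' = {w\<in>W. b x w = 0 \<and> b y w = 0}"
    note complement = hyperbolic_complement[OF lin1 lin2 alt z sub val nondeg x(1) y bxy, folded W'_def]
    obtain m xs ys where IH1: "\<forall>p<m. xs p \<in> W' \<and> ys p \<in> W'"
      and IH2: "symplectic_family b z m xs ys"
      and IH3: "W' \<subseteq> span (xs ` {..<m} \<union> ys ` {..<m})"
      using less.hyps[OF complement(2,1) _ complement(3)] val unfolding W'_def by blast
    have perp: "b x v = 0" "b y v = 0" "b v x = 0" "b v y = 0" if "v \<in> W'" for v
      using that bracket_antisym[OF lin1 lin2 alt, of v x] bracket_antisym[OF lin1 lin2 alt, of v y]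
      by (auto simp: W'_def)
    define xs' where "xs' = xs(m := x)"
    define ys' where "ys' = ys(m := y)"
    have "\<forall>p<Suc m. xs' p \<in> W \<and> ys' p \<in> W"
      using IH1 x(1) y by (auto simp: xs'_def ys'_def less_Suc_eq W'_def)
    moreover have "symplectic_family b z (Suc m) xs' ys'"
      using IH1 IH2 bxy alt perp by (auto simp: symplectic_family_def xs'_def ys'_def less_Suc_eq)
    moreover have "W \<subseteq> span (xs' ` {..<Suc m} \<union> ys' ` {..<Suc m})" (is "_ \<subseteq> span ?B")
    proof -
      have "span (xs ` {..<m} \<union> ys ` {..<m}) \<subseteq> span ?B"
        by (rule span_mono) (auto simp: xs'_def ys'_def image_def)
      then have "W' \<subseteq> span ?B" using IH3 by (rule order_trans[rotated])
      moreover have "x \<in> span ?B" "y \<in> span ?B"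
        by (rule span_base, force simp: xs'_def ys'_def)+
      ultimately have "span (insert x (insert y W')) \<subseteq> span ?B"
        by (simp add: span_minimal)
      then show ?thesis by (rule order_trans[OF complement(4)])
    qed
    ultimately show ?thesis by blast
  qed
qed

text \<open>\<open>I\<close> is a Heisenberg algebra with central generator \<open>z\<close> and canonical basis
  \<open>z, xs, ys\<close>; the vectors \<open>xs, ys\<close> are chosen orthogonal to \<open>z\<close> in the ambient inner
  product, which later helps to separate \<open>z\<close> from them.\<close>
definition heisenberg_frame ::
    "('a::euclidean_space \<Rightarrow> 'a \<Rightarrow> 'a) \<Rightarrow> 'a set \<Rightarrow> 'a \<Rightarrow> nat \<Rightarrow> (nat \<Rightarrow> 'a) \<Rightarrow> (nat \<Rightarrow> 'a) \<Rightarrow> bool" where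
  "heisenberg_frame br I z m xs ys \<longleftrightarrow>
     z \<in> I \<and> z \<noteq> 0 \<and> (\<forall>x. br z x = 0) \<and>
     (\<forall>p<m. xs p \<in> I \<and> ys p \<in> I \<and> inner (xs p) z = 0 \<and> inner (ys p) z = 0) \<and>
     symplectic_family br z m xs ys \<and> I \<subseteq> span (insert z (xs ` {..<m} \<union> ys ` {..<m}))"

text \<open>A subspace whose brackets lie in \<open>span {z}\<close> and whose centre is \<open>span {z}\<close> (with
  \<open>z\<close> central) carries a Heisenberg frame: apply the symplectic basis theorem to the
  orthogonal complement of \<open>z\<close>, where the bracket is nondegenerate.\<close>
lemma heisenberg_frame_exists:
  fixes br :: "'a::euclidean_space \<Rightarrow> 'a \<Rightarrow> 'a"
  assumes lin1: "\<And>x. linear (br x)" and lin2: "\<And>y. linear (\<lambda>x. br x y)"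
    and alt: "\<And>x. br x x = 0"
    and subI: "subspace I" and zI: "z \<in> I" and z0: "z \<noteq> 0" and zc: "\<And>x. br z x = 0"
    and val: "\<And>a b. a \<in> I \<Longrightarrow> b \<in> I \<Longrightarrow> br a b \<in> span {z}"
    and cen: "\<And>w. w \<in> I \<Longrightarrow> \<forall>u\<in>I. br w u = 0 \<Longrightarrow> w \<in> span {z}"
  shows "\<exists>m xs ys. heisenberg_frame br I z m xs ys"
proof -
  define W where "W = {w\<in>I. inner w z = 0}"
  have subW: "subspace W" using subI by (auto simp: W_def subspace_def inner_add_left)
  have zz: "inner z z \<noteq> 0" using z0 by simp
  define c where "c u = inner u z / inner z z" for u
  have proj: "u - c u *\<^sub>R z \<in> W" if "u \<in> I" for u
    using that zI subI zz by (auto simp: W_def c_def subspace_diff subspace_scale inner_diff_left)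
  have nondeg: "\<forall>w\<in>W. w \<noteq> 0 \<longrightarrow> (\<exists>y\<in>W. br w y \<noteq> 0)"
  proof (intro ballI impI, rule ccontr)
    fix w assume w: "w \<in> W" "w \<noteq> 0" and no: "\<not> (\<exists>y\<in>W. br w y \<noteq> 0)"
    have wc: "br w u = 0" if "u \<in> I" for u
    proof -
      have "br w z = 0" using bracket_antisym[OF lin1 lin2 alt, of w z] zc by simp
      then have "br w u = br w (u - c u *\<^sub>R z)"
        by (simp add: linear_diff[OF lin1] linear_scale[OF lin1])
      then show ?thesis using no proj[OF that] by auto
    qed
    obtain a where a: "w = a *\<^sub>R z" using cen[of w] wc w(1) by (auto simp: W_def span_singleton)
    then have "a = 0" using w(1) zz by (simp add: W_def)
    then show False using a w(2) by simp
  qed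
  obtain m xs ys where inW: "\<forall>p<m. xs p \<in> W \<and> ys p \<in> W"
    and symp: "symplectic_family br z m xs ys" and spW: "W \<subseteq> span (xs ` {..<m} \<union> ys ` {..<m})"
    using symplectic_basis[OF lin1 lin2 alt z0 subW _ nondeg] val by (auto simp: W_def)
  have "I \<subseteq> span (insert z (xs ` {..<m} \<union> ys ` {..<m}))" (is "_ \<subseteq> span ?B")
  proof
    fix u assume u: "u \<in> I"
    have "u - c u *\<^sub>R z \<in> span ?B" using spW proj[OF u] span_mono[of _ ?B] by blast
    moreover have "z \<in> span ?B" by (simp add: span_base)
    ultimately show "u \<in> span ?B" by (metis diff_add_cancel span_add span_scale)
  qed
  then show ?thesis using inW symp zI z0 zc
    by (intro exI[of _ m] exI[of _ xs] exI[of _ ys]) (auto simp: heisenberg_frame_def W_def)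
qed

section \<open>Splitting into two ideals\<close>

definition ideal_derived :: "('a::euclidean_space \<Rightarrow> 'a \<Rightarrow> 'a) \<Rightarrow> 'a set \<Rightarrow> 'a set" where
  "ideal_derived br I = span {br a b | a b. a \<in> I \<and> b \<in> I}"

locale ideal_splitting =
  fixes br :: "'a::euclidean_space \<Rightarrow> 'a \<Rightarrow> 'a" and I J :: "'a set"
  assumes lie: "lie_algebra br" and ideal_I: "lie_ideal br I" and ideal_J: "lie_ideal br J"
    and disjoint: "I \<inter> J = {0}" and covers: "\<And>x. \<exists>i\<in>I. \<exists>j\<in>J. x = i + j"
begin

lemma swap: "ideal_splitting br J I"
  using lie ideal_I ideal_J disjoint covers
  by unfold_locales (auto, metis add.commute)

lemma lin1: "linear (br x)" and lin2: "linear (\<lambda>x. br x y)" and alt: "br x x = 0"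
  using lie by (auto simp: lie_algebra_def)

lemma anti: "br x y = - br y x"
  using bracket_antisym[OF lin1 lin2 alt] .

lemma subspace_I: "subspace I" and subspace_J: "subspace J"
  using ideal_I ideal_J by (auto simp: lie_ideal_def)

lemma bracket_in_I: "x \<in> I \<Longrightarrow> br x y \<in> I" "y \<in> I \<Longrightarrow> br x y \<in> I"
  using ideal_I subspace_I anti by (metis lie_ideal_def subspace_neg)+

text \<open>Brackets between the two ideals vanish, as they lie in \<open>I \<inter> J = {0}\<close>.\<close>
lemma bracket_across: "i \<in> I \<Longrightarrow> j \<in> J \<Longrightarrow> br i j = 0"
  using bracket_in_I ideal_J disjoint unfolding lie_ideal_def by blast

lemma bracket_across': "i \<in> I \<Longrightarrow> j \<in> J \<Longrightarrow> br j i = 0"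
  using bracket_across anti by (metis neg_equal_0_iff_equal)

lemma ideal_derived_subset: "ideal_derived br I \<subseteq> I"
  unfolding ideal_derived_def using bracket_in_I subspace_I by (intro span_minimal) auto

lemma derived_algebra_split:
  "derived_algebra br = {a + b | a b. a \<in> ideal_derived br I \<and> b \<in> ideal_derived br J}"
proof -
  let ?GI = "{br a b | a b. a \<in> I \<and> b \<in> I}" and ?GJ = "{br a b | a b. a \<in> J \<and> b \<in> J}"
  have "{br x y | x y. True} \<subseteq> span (?GI \<union> ?GJ)"
  proof clarify
    fix x y
    obtain i j i' j' where ij: "i \<in> I" "j \<in> J" "x = i + j" "i' \<in> I" "j' \<in> J" "y = i' + j'"
      using covers by meson
    have "br x y = br i i' + br j j'"
      using ij bracket_across ideal_splitting.bracket_across[OF swap]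
      by (simp add: linear_add[OF lin1] linear_add[OF lin2])
    moreover have "br i i' \<in> span (?GI \<union> ?GJ)" "br j j' \<in> span (?GI \<union> ?GJ)"
      using ij by (blast intro: span_base)+
    ultimately show "br x y \<in> span (?GI \<union> ?GJ)" by (simp add: span_add)
  qed
  moreover have "?GI \<union> ?GJ \<subseteq> span {br x y | x y. True}" by (blast intro: span_base)
  ultimately have "derived_algebra br = span (?GI \<union> ?GJ)"
    unfolding derived_algebra_def span_eq by blast
  then show ?thesis by (simp add: span_Un ideal_derived_def)
qed

lemma central_in_ideal_derived:
  assumes cd: "derived_algebra br = lie_center br"
    and w: "w \<in> I" "\<forall>u\<in>I. br w u = 0"
  shows "w \<in> ideal_derived br I"
proof -
  have "br w x = 0" for x
    using covers[of x] w bracket_across by (auto simp: linear_add[OF lin1])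
  then have "w \<in> {a + b | a b. a \<in> ideal_derived br I \<and> b \<in> ideal_derived br J}"
    using cd derived_algebra_split by (simp add: lie_center_def)
  then obtain a b where ab: "a \<in> ideal_derived br I" "b \<in> ideal_derived br J" "w = a + b"
    by blast
  have "a \<in> I" using ab(1) ideal_derived_subset by blast
  then have "w - a \<in> I" using w(1) subspace_I by (simp add: subspace_diff)
  then have "b \<in> I" using ab(3) by simp
  then have "b = 0"
    using ab(2) disjoint ideal_splitting.ideal_derived_subset[OF swap] by auto
  then show ?thesis using ab by simp
qed

lemma ideal_derived_nonzero:
  assumes "derived_algebra br = lie_center br" and "I \<noteq> {0}"
  shows "ideal_derived br I \<noteq> {0}"
proof
  assume zero: "ideal_derived br I = {0}"
  obtain w where w: "w \<in> I" "w \<noteq> 0" using assms(2) subspace_I subspace_0 by blast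
  have "br w u \<in> ideal_derived br I" if "u \<in> I" for u
    unfolding ideal_derived_def using w(1) that by (blast intro: span_base)
  then have "\<forall>u\<in>I. br w u = 0" using zero by blast
  then show False using central_in_ideal_derived[OF assms(1) w(1)] zero w(2) by simp
qed

lemma ideal_derived_dim_one:
  assumes cd: "derived_algebra br = lie_center br" and dim2: "dim (derived_algebra br) = 2"
    and "I \<noteq> {0}" "J \<noteq> {0}"
  shows "dim (ideal_derived br I) = 1"
proof -
  let ?SI = "ideal_derived br I" and ?SJ = "ideal_derived br J"
  have subspaces: "subspace ?SI" "subspace ?SJ" by (simp_all add: ideal_derived_def)
  have "?SI \<inter> ?SJ \<subseteq> {0}"
    using ideal_derived_subset ideal_splitting.ideal_derived_subset[OF swap] disjoint by blast
  then have "dim (?SI \<inter> ?SJ) = 0" by simp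
  then have sum2: "dim ?SI + dim ?SJ = 2"
    using dim_sums_Int[OF subspaces] dim2 derived_algebra_split by (simp del: dim_eq_0)
  have "?SI \<noteq> {0}" "?SJ \<noteq> {0}"
    using ideal_derived_nonzero[OF cd assms(3)] ideal_splitting.ideal_derived_nonzero[OF swap cd assms(4)] .
  then have "\<not> ?SI \<subseteq> {0}" "\<not> ?SJ \<subseteq> {0}"
    using subspace_0[OF subspaces(1)] subspace_0[OF subspaces(2)] by blast+
  then have "dim ?SI \<noteq> 0" "dim ?SJ \<noteq> 0" by simp_all
  then show ?thesis using sum2 by linarith
qed

lemma heisenberg_frame_of_ideal:
  assumes "derived_algebra br = lie_center br" and "dim (derived_algebra br) = 2"
    and "I \<noteq> {0}" "J \<noteq> {0}"
  obtains z m xs ys where "heisenberg_frame br I z m xs ys"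
proof -
  obtain z where z: "z \<noteq> 0" "ideal_derived br I = span {z}"
    using subspace_dim_one[OF _ ideal_derived_dim_one[OF assms]] by (auto simp: ideal_derived_def)
  have zSI: "z \<in> ideal_derived br I" using z(2) by (simp add: span_base)
  then have zI: "z \<in> I" using ideal_derived_subset by blast
  have "0 \<in> ideal_derived br J" by (simp add: ideal_derived_def span_zero)
  with zSI have "z + 0 \<in> derived_algebra br" unfolding derived_algebra_split by blast
  then have central: "br z x = 0" for x using assms(1) by (simp add: lie_center_def)
  have "br a b \<in> ideal_derived br I" if "a \<in> I" "b \<in> I" for a b
    unfolding ideal_derived_def using that by (blast intro: span_base)
  then have val: "br a b \<in> span {z}" if "a \<in> I" "b \<in> I" for a b
    using z(2) that by simp
  have cen: "w \<in> span {z}" if "w \<in> I" "\<forall>u\<in>I. br w u = 0" for w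
    using central_in_ideal_derived[OF assms(1) that] z(2) by simp
  obtain m xs ys where "heisenberg_frame br I z m xs ys"
    using heisenberg_frame_exists[OF lin1 lin2 alt subspace_I zI z(1) central val cen] by blast
  then show ?thesis by (rule that)
qed

lemma frame_brackets:
  assumes "heisenberg_frame br I z m xs ys" "p < m" "q < m"
  shows "br (xs p) (ys q) = (if p = q then z else 0)" "br (ys p) (xs q) = (if p = q then - z else 0)"
    "br (xs p) (xs q) = 0" "br (ys p) (ys q) = 0"
  using assms anti[of "ys p" "xs q"] by (auto simp: heisenberg_frame_def symplectic_family_def)

lemma frame_central:
  assumes "heisenberg_frame br I z m xs ys"
  shows "br z x = 0" "br x z = 0"
  using assms anti[of x z] by (auto simp: heisenberg_frame_def)

lemma centre_functional:
  assumes zI: "z \<in> I" and z0: "z \<noteq> 0"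
  obtains \<phi> :: "'a \<Rightarrow> real" where "linear \<phi>" "\<phi> z = 1" "\<And>w. w \<in> J \<Longrightarrow> \<phi> w = 0"
    "\<And>w. w \<in> I \<Longrightarrow> inner w z = 0 \<Longrightarrow> \<phi> w = 0"
proof -
  define W where "W = {w\<in>I. inner w z = 0}"
  have "z \<notin> span (W \<union> J)"
  proof
    assume "z \<in> span (W \<union> J)"
    then obtain x y where xy: "x \<in> span W" "y \<in> span J" "z = x + y" unfolding span_Un by blast
    have "span W \<subseteq> I" using subspace_I by (intro span_minimal) (auto simp: W_def)
    then have xI: "x \<in> I" using xy by auto
    have "y \<in> J" using xy subspace_J by (metis span_eq_iff)
    moreover have "y \<in> I" using xy(3) xI zI subspace_I by (metis add_diff_cancel_left' subspace_diff)
    ultimately have "z = x" using xy disjoint by auto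
    moreover have "inner x z = 0"
      by (rule real_vector.linear_eq_0_on_span[OF _ _ xy(1)])
        (auto simp: W_def intro!: linearI inner_add_left)
    ultimately show False using z0 by simp
  qed
  then obtain \<phi> :: "'a \<Rightarrow> real" where "linear \<phi>" "\<phi> z = 1" "\<And>w. w \<in> span (W \<union> J) \<Longrightarrow> \<phi> w = 0"
    using functional_separating[OF subspace_span] by metis
  then show ?thesis using that span_base by (metis (mono_tags, lifting) UnCI W_def mem_Collect_eq)
qed

lemma frame_functional_x:
  assumes frame: "heisenberg_frame br I z m xs ys" and p: "p < m"
  obtains \<phi> :: "'a \<Rightarrow> real" where "linear \<phi>" "\<phi> (xs p) = 1" "\<And>q. q < m \<Longrightarrow> q \<noteq> p \<Longrightarrow> \<phi> (xs q) = 0"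
    "\<And>q. q < m \<Longrightarrow> \<phi> (ys q) = 0" "\<phi> z = 0" "\<And>w. w \<in> J \<Longrightarrow> \<phi> w = 0"
proof -
  have zz: "inner z z \<noteq> 0" using frame by (simp add: heisenberg_frame_def)
  define \<phi> where "\<phi> w = inner (br w (ys p)) z / inner z z" for w
  have "linear \<phi>" unfolding \<phi>_def
    by (rule linearI) (simp_all add: linear_add[OF lin2] linear_scale[OF lin2] inner_add_left add_divide_distrib)
  moreover have "\<phi> w = 0" if "w \<in> J" for w
    using that frame bracket_across' p by (simp add: \<phi>_def heisenberg_frame_def)
  ultimately show ?thesis
    using that frame_brackets[OF frame _ p] frame_central[OF frame] p zz by (simp add: \<phi>_def)
qed

lemma frame_functional_y:
  assumes frame: "heisenberg_frame br I z m xs ys" and p: "p < m"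
  obtains \<phi> :: "'a \<Rightarrow> real" where "linear \<phi>" "\<phi> (ys p) = 1" "\<And>q. q < m \<Longrightarrow> q \<noteq> p \<Longrightarrow> \<phi> (ys q) = 0"
    "\<And>q. q < m \<Longrightarrow> \<phi> (xs q) = 0" "\<phi> z = 0" "\<And>w. w \<in> J \<Longrightarrow> \<phi> w = 0"
proof -
  have zz: "inner z z \<noteq> 0" using frame by (simp add: heisenberg_frame_def)
  define \<phi> where "\<phi> w = inner (br (xs p) w) z / inner z z" for w
  have "linear \<phi>" unfolding \<phi>_def
    by (rule linearI) (simp_all add: linear_add[OF lin1] linear_scale[OF lin1] inner_add_left add_divide_distrib)
  moreover have "\<phi> w = 0" if "w \<in> J" for w
    using that frame bracket_across p by (simp add: \<phi>_def heisenberg_frame_def)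
  ultimately show ?thesis
    using that frame_brackets[OF frame p] frame_central[OF frame] p zz by (simp add: \<phi>_def)
qed

end

section \<open>A criterion for Einstein nilradicals\<close>

lemma inner_product_linear_left:
  assumes "inner_product ip"
  shows "linear (\<lambda>x. ip x y)"
  using assms unfolding inner_product_def by (metis (no_types, lifting) ext)

lemma ricci_form_sym:
  assumes "inner_product ip"
  shows "ricci_form br ip es X Y = ricci_form br ip es Y X"
  using assms unfolding ricci_form_def inner_product_def by (simp add: mult.commute)

lemma ricci_form_linear:
  assumes lin2: "\<And>y. linear (\<lambda>x. br x y)" and ip: "inner_product ip"
  shows "linear (\<lambda>X. ricci_form br ip es X Y)" and "linear (ricci_form br ip es X)"
proof -
  have ipl: "linear (\<lambda>x. ip x y)" for y by (rule inner_product_linear_left[OF ip])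
  have ipr: "linear (ip x)" for x using ip by (simp add: inner_product_def)
  show left: "linear (\<lambda>X. ricci_form br ip es X Y)" for Y
    unfolding ricci_form_def
    by (rule linearI)
      (simp_all add: linear_add[OF lin2] linear_scale[OF lin2] linear_add[OF ipl] linear_scale[OF ipl]
        linear_add[OF ipr] linear_scale[OF ipr] sum.distrib sum_distrib_left algebra_simps)
  show "linear (ricci_form br ip es X)"
  proof -
    have "ricci_form br ip es X = (\<lambda>Y. ricci_form br ip es Y X)"
      using ricci_form_sym[OF ip] by blast
    then show ?thesis using left by simp
  qed
qed

text \<open>Any basis is orthonormal for a suitable inner product (pull back the standard inner
  product along the isomorphism sending it to the standard basis); sums over the resulting
  orthonormal list are sums over the index set.\<close>
lemma orthonormalizing_inner_product:
  fixes bv :: "'k \<Rightarrow> 'a::euclidean_space"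
  assumes fin: "finite K" and inj: "inj_on bv K" and ind: "independent (bv ` K)"
    and spn: "span (bv ` K) = UNIV"
  obtains ip es where "inner_product ip" "orthonormal_basis ip es"
    "\<And>a b. a \<in> K \<Longrightarrow> b \<in> K \<Longrightarrow> ip (bv a) (bv b) = (if a = b then 1 else 0)"
    "\<And>f :: 'a \<Rightarrow> real. (\<Sum>i<length es. f (es ! i)) = (\<Sum>a\<in>K. f (bv a))"
proof -
  have cardK: "card K = DIM('a)"
    using dim_span_eq_card_independent[OF ind] card_image[OF inj] spn by (simp add: dim_UNIV)
  obtain h where h: "bij_betw h K (Basis :: 'a set)"
    using finite_same_card_bij[OF fin finite_Basis[where 'a='a]] cardK by auto
  obtain T where linT: "linear T" and Tv: "\<forall>v\<in>bv ` K. T v = h (the_inv_into K bv v)"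
    using linear_independent_extend[OF ind, of "\<lambda>v. h (the_inv_into K bv v)"] by blast
  have Tbv: "T (bv a) = h a" if "a \<in> K" for a
    using Tv that the_inv_into_f_f[OF inj that] by auto
  have "Basis \<subseteq> range T"
  proof
    fix b :: 'a assume "b \<in> Basis"
    then obtain a where "a \<in> K" "b = h a" using h unfolding bij_betw_def by auto
    then show "b \<in> range T" using Tbv by (metis rangeI)
  qed
  then have "span Basis \<subseteq> range T"
    by (rule span_minimal) (rule linear_subspace_image[OF linT subspace_UNIV])
  then have surjT: "surj T" by (simp add: span_Basis top.extremum_uniqueI)
  have injT: "inj T" by (rule linear_surjective_imp_injective[OF linT surjT]) simp
  define ip where "ip x y = inner (T x) (T y)" for x y
  have ipprod: "inner_product ip"
    unfolding inner_product_def
  proof (intro conjI allI impI)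
    show "linear (ip x)" for x
      by (rule linearI) (simp_all add: ip_def linear_add[OF linT] linear_scale[OF linT] inner_add_right)
    show "ip x y = ip y x" for x y by (simp add: ip_def inner_commute)
    show "ip x x > 0" if "x \<noteq> 0" for x
      using injT that linear_0[OF linT] by (metis injD ip_def inner_gt_zero_iff)
  qed
  have orth: "ip (bv a) (bv b) = (if a = b then 1 else 0)" if "a \<in> K" "b \<in> K" for a b
  proof -
    have "h a \<in> Basis" "h b \<in> Basis" "h a = h b \<longleftrightarrow> a = b"
      using h that unfolding bij_betw_def inj_on_def by auto
    then show ?thesis unfolding ip_def using Tbv that by (simp add: inner_Basis)
  qed
  obtain ks where ks: "set ks = K" "distinct ks" using finite_distinct_list[OF fin] by blast
  define es where "es = map bv ks"
  have onb: "orthonormal_basis ip es"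
    unfolding orthonormal_basis_def
  proof (intro conjI allI impI)
    show "length es = DIM('a)" using ks cardK distinct_card[OF ks(2)] by (simp add: es_def)
    fix i j assume "i < length es" "j < length es"
    then show "ip (es ! i) (es ! j) = (if i = j then 1 else 0)"
      using orth ks by (auto simp: es_def nth_eq_iff_index_eq)
  qed
  have sums: "(\<Sum>i<length es. f (es ! i)) = (\<Sum>a\<in>K. f (bv a))" for f :: "'a \<Rightarrow> real"
    using sum.distinct_set_conv_list[OF ks(2), of "\<lambda>a. f (bv a)"] ks(1)
    by (simp add: es_def sum_list_sum_nth atLeast0LessThan)
  show ?thesis by (rule that[OF ipprod onb orth sums])
qed

lemma einstein_nilradical_if_diagonal:
  fixes br :: "'a::euclidean_space \<Rightarrow> 'a \<Rightarrow> 'a" and bv :: "'k \<Rightarrow> 'a"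
  assumes lin1: "\<And>x. linear (br x)" and lin2: "\<And>y. linear (\<lambda>x. br x y)"
    and ip: "inner_product ip" and onb: "orthonormal_basis ip es" and spn: "span (bv ` K) = UNIV"
    and orth: "\<And>a b. a \<in> K \<Longrightarrow> b \<in> K \<Longrightarrow> ip (bv a) (bv b) = (if a = b then 1 else 0)"
    and linD: "linear D" and eigen: "\<And>a. a \<in> K \<Longrightarrow> D (bv a) = d a *\<^sub>R bv a"
    and der: "\<And>a b. a \<in> K \<Longrightarrow> b \<in> K \<Longrightarrow>
                D (br (bv a) (bv b)) = br (D (bv a)) (bv b) + br (bv a) (D (bv b))"
    and ric: "\<And>a b. a \<in> K \<Longrightarrow> b \<in> K \<Longrightarrow>
                ricci_form br ip es (bv a) (bv b) = (if a = b then lam + d a else 0)"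
  shows "einstein_nilradical br"
proof -
  have ipr: "linear (ip x)" for x using ip by (simp add: inner_product_def)
  have ipl: "linear (\<lambda>x. ip x y)" for y by (rule inner_product_linear_left[OF ip])
  have on_basis: "f x y = g x y"
    if "\<And>x. linear (f x)" "\<And>y. linear (\<lambda>x. f x y)" "\<And>x. linear (g x)" "\<And>y. linear (\<lambda>x. g x y)"
      and "\<And>a b. a \<in> K \<Longrightarrow> b \<in> K \<Longrightarrow> f (bv a) (bv b) = g (bv a) (bv b)"
    for f g :: "'a \<Rightarrow> 'a \<Rightarrow> 'b::real_vector" and x y
    using bilinear_eq_on_spanning_set[of f g "bv ` K", OF that(1-4) spn] that(5) by blast
  have "D (br X Y) = br (D X) Y + br X (D Y)" for X Y
  proof (rule on_basis[of "\<lambda>X Y. D (br X Y)" "\<lambda>X Y. br (D X) Y + br X (D Y)"])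
    show "linear (\<lambda>Y. D (br X Y))" "linear (\<lambda>X. D (br X Y))" for X Y
      using linear_compose[OF lin1 linD] linear_compose[OF lin2 linD] by (simp_all add: o_def)
    show "linear (\<lambda>Y. br (D X) Y + br X (D Y))" "linear (\<lambda>X. br (D X) Y + br X (D Y))" for X Y
      using linear_compose[OF linD lin1] linear_compose[OF linD lin2] lin1 lin2
      by (auto intro!: linear_compose_add simp: o_def)
  qed (rule der)
  moreover have "ip (D X) Y = ip X (D Y)" for X Y
    by (rule on_basis[of "\<lambda>X Y. ip (D X) Y" "\<lambda>X Y. ip X (D Y)"])
      (use linear_compose[OF linD ipl] linear_compose[OF linD ipr] ipl ipr eigen orth
        linear_scale[OF ipl] linear_scale[OF ipr] in \<open>simp_all add: o_def\<close>)
  moreover have "ricci_form br ip es X Y = ip (lam *\<^sub>R X + D X) Y" for X Y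
  proof (rule on_basis[of "ricci_form br ip es" "\<lambda>X Y. ip (lam *\<^sub>R X + D X) Y"])
    show "linear (\<lambda>Y. ip (lam *\<^sub>R X + D X) Y)" "linear (\<lambda>X. ip (lam *\<^sub>R X + D X) Y)" for X Y
      using ipr linear_compose[OF linear_compose_add[OF linear_compose_scale_right[OF linear_id] linD] ipl]
      by (simp_all add: o_def)
  qed (use ricci_form_linear[OF lin2 ip] ric eigen orth linear_add[OF ipl] linear_scale[OF ipl]
         in \<open>auto simp: algebra_simps\<close>)
  ultimately show ?thesis
    unfolding einstein_nilradical_def lie_derivation_def using ip onb linD by blast
qed

section \<open>The model: a sum of two Heisenberg algebras\<close>

text \<open>Indices of the basis of the model \<open>H\<^bsub>2m+1\<^esub> \<oplus> H\<^bsub>2k+1\<^esub>\<close>: \<open>X1 p, Y1 p, Z1\<close> for the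
  first Heisenberg factor, \<open>X2 p, Y2 p, Z2\<close> for the second.\<close>
datatype model_index = X1 nat | Y1 nat | X2 nat | Y2 nat | Z1 | Z2

definition model_indices :: "nat \<Rightarrow> nat \<Rightarrow> model_index set" where
  "model_indices m k = X1 ` {..<m} \<union> Y1 ` {..<m} \<union> X2 ` {..<k} \<union> Y2 ` {..<k} \<union> {Z1, Z2}"

lemma finite_model_indices [simp]: "finite (model_indices m k)"
  by (simp add: model_indices_def)

lemma model_indices_cases:
  assumes "a \<in> model_indices m k"
  obtains (x1) p where "p < m" "a = X1 p" | (y1) p where "p < m" "a = Y1 p"
    | (x2) p where "p < k" "a = X2 p" | (y2) p where "p < k" "a = Y2 p" | (z1) "a = Z1" | (z2) "a = Z2"
  using assms unfolding model_indices_def by blast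

lemma sum_model_indices:
  fixes h :: "model_index \<Rightarrow> 'b::comm_monoid_add"
  shows "sum h (model_indices m k) = (\<Sum>p<m. h (X1 p)) + (\<Sum>p<m. h (Y1 p)) +
           (\<Sum>p<k. h (X2 p)) + (\<Sum>p<k. h (Y2 p)) + h Z1 + h Z2"
proof -
  let ?A = "X1 ` {..<m}" and ?B = "Y1 ` {..<m}" and ?C = "X2 ` {..<k}" and ?D = "Y2 ` {..<k}"
  have split: "model_indices m k = ((((?A \<union> ?B) \<union> ?C) \<union> ?D) \<union> {Z1}) \<union> {Z2}"
    unfolding model_indices_def by auto
  have "sum h (model_indices m k) = sum h ?A + sum h ?B + sum h ?C + sum h ?D + sum h {Z1} + sum h {Z2}"
    unfolding split by (subst sum.union_disjoint, simp, simp, fastforce)+ (rule refl)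
  then show ?thesis by (simp add: sum.reindex inj_on_def)
qed

text \<open>Structure constants: \<open>[e\<^sub>a, e\<^sub>b] = bracket1 a b \<cdot> e\<^sub>Z\<^sub>1 + bracket2 a b \<cdot> e\<^sub>Z\<^sub>2\<close>
  (up to the scaling of the centres).\<close>
fun bracket1 :: "model_index \<Rightarrow> model_index \<Rightarrow> real" where
  "bracket1 (X1 p) (Y1 q) = (if p = q then 1 else 0)"
| "bracket1 (Y1 p) (X1 q) = (if p = q then -1 else 0)"
| "bracket1 _ _ = 0"

fun bracket2 :: "model_index \<Rightarrow> model_index \<Rightarrow> real" where
  "bracket2 (X2 p) (Y2 q) = (if p = q then 1 else 0)"
| "bracket2 (Y2 p) (X2 q) = (if p = q then -1 else 0)"
| "bracket2 _ _ = 0"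

fun noncentral1 :: "model_index \<Rightarrow> real" where
  "noncentral1 (X1 _) = 1" | "noncentral1 (Y1 _) = 1" | "noncentral1 _ = 0"

fun noncentral2 :: "model_index \<Rightarrow> real" where
  "noncentral2 (X2 _) = 1" | "noncentral2 (Y2 _) = 1" | "noncentral2 _ = 0"

lemma if_mult_if: "(if x = p then (c::real) else 0) * (if y = p then d else 0) =
    (if x = p then (if y = x then c * d else 0) else 0)"
  by auto

lemma bracket1_orthogonal:
  "a \<in> model_indices m k \<Longrightarrow> b \<in> model_indices m k \<Longrightarrow>
     (\<Sum>c\<in>model_indices m k. bracket1 a c * bracket1 b c) = (if a = b then noncentral1 a else 0)"
  unfolding sum_model_indices by (cases a; cases b) (auto simp: model_indices_def if_mult_if)

lemma bracket2_orthogonal: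
  "a \<in> model_indices m k \<Longrightarrow> b \<in> model_indices m k \<Longrightarrow>
     (\<Sum>c\<in>model_indices m k. bracket2 a c * bracket2 b c) = (if a = b then noncentral2 a else 0)"
  unfolding sum_model_indices by (cases a; cases b) (auto simp: model_indices_def if_mult_if)

lemma bracket1_bracket2: "bracket1 a b * bracket2 a b = 0"
  by (cases a; cases b) auto

lemma bracket1_norm: "(\<Sum>a\<in>model_indices m k. \<Sum>b\<in>model_indices m k. bracket1 a b * bracket1 a b) = 2 * real m"
  using bracket1_orthogonal by (simp add: sum_model_indices)

lemma bracket2_norm: "(\<Sum>a\<in>model_indices m k. \<Sum>b\<in>model_indices m k. bracket2 a b * bracket2 a b) = 2 * real k"
  using bracket2_orthogonal by (simp add: sum_model_indices)

lemma ricci_form_on_model_basis: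
  fixes br :: "'a::euclidean_space \<Rightarrow> 'a \<Rightarrow> 'a" and bv :: "model_index \<Rightarrow> 'a"
    and m k :: nat and s1 s2 :: real
  defines "K \<equiv> model_indices m k"
  assumes ip: "inner_product ip"
    and orth: "\<And>a b. a \<in> K \<Longrightarrow> b \<in> K \<Longrightarrow> ip (bv a) (bv b) = (if a = b then 1 else 0)"
    and sums: "\<And>f :: 'a \<Rightarrow> real. (\<Sum>i<length es. f (es ! i)) = (\<Sum>a\<in>K. f (bv a))"
    and table: "\<And>a b. a \<in> K \<Longrightarrow> b \<in> K \<Longrightarrow>
                  br (bv a) (bv b) = (s1 * bracket1 a b) *\<^sub>R bv Z1 + (s2 * bracket2 a b) *\<^sub>R bv Z2"
    and cd: "c \<in> K" "d \<in> K"
  shows "ricci_form br ip es (bv c) (bv d) =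
           (if c = d then (if c = Z1 then real m * s1\<^sup>2 / 2 else 0) + (if c = Z2 then real k * s2\<^sup>2 / 2 else 0)
                          - (s1\<^sup>2 * noncentral1 c + s2\<^sup>2 * noncentral2 c) / 2
            else 0)"
proof -
  have Z: "Z1 \<in> K" "Z2 \<in> K" by (auto simp: K_def model_indices_def)
  have ipl: "linear (\<lambda>x. ip x y)" for y by (rule inner_product_linear_left[OF ip])
  have ipr: "linear (ip x)" for x using ip by (simp add: inner_product_def)
  have coord: "ip (\<alpha> *\<^sub>R bv Z1 + \<beta> *\<^sub>R bv Z2) (bv e) =
                 \<alpha> * (if e = Z1 then 1 else 0) + \<beta> * (if e = Z2 then 1 else 0)" if "e \<in> K" for \<alpha> \<beta> e
    using that Z by (simp add: linear_add[OF ipl] linear_scale[OF ipl] orth)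
  have coord2: "ip (\<alpha> *\<^sub>R bv Z1 + \<beta> *\<^sub>R bv Z2) (\<gamma> *\<^sub>R bv Z1 + \<delta> *\<^sub>R bv Z2) = \<alpha> * \<gamma> + \<beta> * \<delta>"
    for \<alpha> \<beta> \<gamma> \<delta>
    using Z by (simp add: linear_add[OF ipr] linear_scale[OF ipr] coord)
  have first_term: "(\<Sum>i<length es. ip (br (bv c) (es ! i)) (br (bv d) (es ! i))) =
                 (if c = d then s1\<^sup>2 * noncentral1 c + s2\<^sup>2 * noncentral2 c else 0)"
  proof -
    have "(\<Sum>i<length es. ip (br (bv c) (es ! i)) (br (bv d) (es ! i))) =
            (\<Sum>a\<in>K. ip (br (bv c) (bv a)) (br (bv d) (bv a)))"
      by (rule sums[of "\<lambda>v. ip (br (bv c) v) (br (bv d) v)"])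
    also have "\<dots> = (\<Sum>a\<in>K. s1\<^sup>2 * (bracket1 c a * bracket1 d a) + s2\<^sup>2 * (bracket2 c a * bracket2 d a))"
      using cd by (intro sum.cong refl) (simp add: table coord2 power2_eq_square)
    also have "\<dots> = s1\<^sup>2 * (\<Sum>a\<in>K. bracket1 c a * bracket1 d a) + s2\<^sup>2 * (\<Sum>a\<in>K. bracket2 c a * bracket2 d a)"
      by (simp add: sum.distrib sum_distrib_left)
    finally show ?thesis using cd by (simp add: K_def bracket1_orthogonal bracket2_orthogonal)
  qed
  have second_term: "(\<Sum>i<length es. \<Sum>j<length es. ip (br (es ! i) (es ! j)) (bv c) * ip (br (es ! i) (es ! j)) (bv d)) =
      s1\<^sup>2 * (if c = Z1 \<and> d = Z1 then 1 else 0) * (2 * real m) +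
      s2\<^sup>2 * (if c = Z2 \<and> d = Z2 then 1 else 0) * (2 * real k)"
  proof -
    have inner_sum: "(\<Sum>j<length es. ip (br v (es ! j)) (bv c) * ip (br v (es ! j)) (bv d)) =
                     (\<Sum>b\<in>K. ip (br v (bv b)) (bv c) * ip (br v (bv b)) (bv d))" for v
      by (rule sums[of "\<lambda>w. ip (br v w) (bv c) * ip (br v w) (bv d)"])
    have "(\<Sum>i<length es. \<Sum>j<length es. ip (br (es ! i) (es ! j)) (bv c) * ip (br (es ! i) (es ! j)) (bv d)) =
          (\<Sum>a\<in>K. \<Sum>b\<in>K. ip (br (bv a) (bv b)) (bv c) * ip (br (bv a) (bv b)) (bv d))"
      unfolding inner_sum by (rule sums[of "\<lambda>v. \<Sum>b\<in>K. ip (br v (bv b)) (bv c) * ip (br v (bv b)) (bv d)"])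
    also have "\<dots> = (\<Sum>a\<in>K. \<Sum>b\<in>K. s1\<^sup>2 * (if c = Z1 \<and> d = Z1 then 1 else 0) * (bracket1 a b * bracket1 a b) +
                            s2\<^sup>2 * (if c = Z2 \<and> d = Z2 then 1 else 0) * (bracket2 a b * bracket2 a b))"
    proof (intro sum.cong refl)
      fix a b assume ab: "a \<in> K" "b \<in> K"
      have "ip (br (bv a) (bv b)) (bv c) * ip (br (bv a) (bv b)) (bv d) =
            s1\<^sup>2 * (if c = Z1 \<and> d = Z1 then 1 else 0) * (bracket1 a b * bracket1 a b) +
            s2\<^sup>2 * (if c = Z2 \<and> d = Z2 then 1 else 0) * (bracket2 a b * bracket2 a b) +
            s1 * s2 * (bracket1 a b * bracket2 a b) *
              ((if c = Z1 then 1 else 0) * (if d = Z2 then 1 else 0) + (if c = Z2 then 1 else 0) * (if d = Z1 then 1 else 0))"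
        using ab cd by (simp add: table coord algebra_simps power2_eq_square)
      then show "ip (br (bv a) (bv b)) (bv c) * ip (br (bv a) (bv b)) (bv d) =
            s1\<^sup>2 * (if c = Z1 \<and> d = Z1 then 1 else 0) * (bracket1 a b * bracket1 a b) +
            s2\<^sup>2 * (if c = Z2 \<and> d = Z2 then 1 else 0) * (bracket2 a b * bracket2 a b)"
        by (simp add: bracket1_bracket2)
    qed
    also have "\<dots> = s1\<^sup>2 * (if c = Z1 \<and> d = Z1 then 1 else 0) * (\<Sum>a\<in>K. \<Sum>b\<in>K. bracket1 a b * bracket1 a b) +
                    s2\<^sup>2 * (if c = Z2 \<and> d = Z2 then 1 else 0) * (\<Sum>a\<in>K. \<Sum>b\<in>K. bracket2 a b * bracket2 a b)"
      by (simp add: sum.distrib sum_distrib_left)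
    finally show ?thesis by (simp add: K_def bracket1_norm bracket2_norm)
  qed
  show ?thesis unfolding ricci_form_def first_term second_term by auto
qed

lemma einstein_model:
  fixes br :: "'a::euclidean_space \<Rightarrow> 'a \<Rightarrow> 'a" and bv :: "model_index \<Rightarrow> 'a"
    and m k :: nat and s1 s2 :: real
  defines "K \<equiv> model_indices m k"
  assumes lin1: "\<And>x. linear (br x)" and lin2: "\<And>y. linear (\<lambda>x. br x y)"
    and inj: "inj_on bv K" and ind: "independent (bv ` K)" and spn: "span (bv ` K) = UNIV"
    and s1: "s1\<^sup>2 = real k + 2" and s2: "s2\<^sup>2 = real m + 2"
    and table: "\<And>a b. a \<in> K \<Longrightarrow> b \<in> K \<Longrightarrow>
                  br (bv a) (bv b) = (s1 * bracket1 a b) *\<^sub>R bv Z1 + (s2 * bracket2 a b) *\<^sub>R bv Z2"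
  shows "einstein_nilradical br"
proof -
  obtain ip es where ip: "inner_product ip" and onb: "orthonormal_basis ip es"
    and orth: "\<And>a b. a \<in> K \<Longrightarrow> b \<in> K \<Longrightarrow> ip (bv a) (bv b) = (if a = b then 1 else 0)"
    and sums: "\<And>f :: 'a \<Rightarrow> real. (\<Sum>i<length es. f (es ! i)) = (\<Sum>a\<in>K. f (bv a))"
    using orthonormalizing_inner_product[OF _ inj ind spn] by (auto simp: K_def)
  define a1 :: real where "a1 = (real m + 1) * (real k + 2) / 2"
  define a2 :: real where "a2 = (real k + 1) * (real m + 2) / 2"
  define lam :: real where "lam = - (real m + 2) * (real k + 2) / 2"
  define d where "d a = (case a of X1 _ \<Rightarrow> a1 | Y1 _ \<Rightarrow> a1 | X2 _ \<Rightarrow> a2 | Y2 _ \<Rightarrow> a2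
                                | Z1 \<Rightarrow> 2 * a1 | Z2 \<Rightarrow> 2 * a2)" for a
  obtain D where linD: "linear D" and eigen: "\<And>a. a \<in> K \<Longrightarrow> D (bv a) = d a *\<^sub>R bv a"
  proof -
    obtain D where "linear D" "\<forall>v\<in>bv ` K. D v = d (the_inv_into K bv v) *\<^sub>R v"
      using linear_independent_extend[OF ind, of "\<lambda>v. d (the_inv_into K bv v) *\<^sub>R v"] by blast
    then show ?thesis using that the_inv_into_f_f[OF inj] by auto
  qed
  have Z: "Z1 \<in> K" "Z2 \<in> K" by (auto simp: K_def model_indices_def)
  have der: "D (br (bv a) (bv b)) = br (D (bv a)) (bv b) + br (bv a) (D (bv b))"
    if ab: "a \<in> K" "b \<in> K" for a b
  proof -
    have weights: "bracket1 a b * d Z1 = bracket1 a b * (d a + d b)"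
        "bracket2 a b * d Z2 = bracket2 a b * (d a + d b)"
      by (cases a; cases b; simp add: d_def)+
    have "D (br (bv a) (bv b)) = (s1 * (bracket1 a b * d Z1)) *\<^sub>R bv Z1 + (s2 * (bracket2 a b * d Z2)) *\<^sub>R bv Z2"
      using ab Z by (simp add: table linear_add[OF linD] linear_scale[OF linD] eigen mult.assoc)
    also have "\<dots> = (d a + d b) *\<^sub>R br (bv a) (bv b)"
      unfolding weights table[OF ab] by (simp add: algebra_simps)
    also have "\<dots> = br (D (bv a)) (bv b) + br (bv a) (D (bv b))"
      using ab by (simp add: eigen linear_scale[OF lin1] linear_scale[OF lin2] scaleR_add_left)
    finally show ?thesis .
  qed
  have diagonal: "(if c = Z1 then real m * s1\<^sup>2 / 2 else 0) + (if c = Z2 then real k * s2\<^sup>2 / 2 else 0)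
                   - (s1\<^sup>2 * noncentral1 c + s2\<^sup>2 * noncentral2 c) / 2 = lam + d c" for c
    by (cases c) (simp_all add: d_def lam_def a1_def a2_def s1 s2 field_simps)
  have ric: "ricci_form br ip es (bv a) (bv b) = (if a = b then lam + d a else 0)"
    if "a \<in> K" "b \<in> K" for a b
  proof -
    have "ricci_form br ip es (bv a) (bv b) =
          (if a = b then (if a = Z1 then real m * s1\<^sup>2 / 2 else 0) + (if a = Z2 then real k * s2\<^sup>2 / 2 else 0)
                          - (s1\<^sup>2 * noncentral1 a + s2\<^sup>2 * noncentral2 a) / 2
           else 0)"
      using ricci_form_on_model_basis[OF ip orth[unfolded K_def] sums[unfolded K_def] table[unfolded K_def]]
        that by (simp add: K_def)
    also have "\<dots> = (if a = b then lam + d a else 0)"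
      by (simp only: diagonal)
    finally show ?thesis .
  qed
  show ?thesis
    by (rule einstein_nilradical_if_diagonal[OF lin1 lin2 ip onb spn orth linD eigen der ric])
qed

section \<open>Two Heisenberg ideals give an Einstein nilradical\<close>

locale two_frames = ideal_splitting +
  fixes z1 :: "'a::euclidean_space" and m :: nat and xs ys :: "nat \<Rightarrow> 'a"
    and z2 :: 'a and k :: nat and us vs :: "nat \<Rightarrow> 'a"
  assumes frame1: "heisenberg_frame br I z1 m xs ys"
    and frame2: "heisenberg_frame br J z2 k us vs"
begin

definition scale1 :: real where "scale1 = sqrt (real k + 2)"
definition scale2 :: real where "scale2 = sqrt (real m + 2)"

definition basis :: "model_index \<Rightarrow> 'a" where
  "basis a = (case a of X1 p \<Rightarrow> xs p | Y1 p \<Rightarrow> ys p | X2 p \<Rightarrow> us p | Y2 p \<Rightarrow> vs p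
                 | Z1 \<Rightarrow> z1 /\<^sub>R scale1 | Z2 \<Rightarrow> z2 /\<^sub>R scale2)"

lemma basis_simps [simp]:
  "basis (X1 p) = xs p" "basis (Y1 p) = ys p" "basis (X2 p) = us p" "basis (Y2 p) = vs p"
  "basis Z1 = z1 /\<^sub>R scale1" "basis Z2 = z2 /\<^sub>R scale2"
  by (simp_all add: basis_def)

lemma scales: "scale1 \<noteq> 0" "scale2 \<noteq> 0" "scale1\<^sup>2 = real k + 2" "scale2\<^sup>2 = real m + 2"
  by (simp_all add: scale1_def scale2_def)

lemma frame_members:
  "p < m \<Longrightarrow> xs p \<in> I" "p < m \<Longrightarrow> ys p \<in> I" "p < k \<Longrightarrow> us p \<in> J" "p < k \<Longrightarrow> vs p \<in> J"
  "z1 \<in> I" "z2 \<in> J" "c *\<^sub>R z1 \<in> I" "c *\<^sub>R z2 \<in> J"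
  using frame1 frame2 subspace_I subspace_J by (auto simp: heisenberg_frame_def subspace_scale)

lemma centres_nonzero: "z1 \<noteq> 0" "z2 \<noteq> 0"
  using frame1 frame2 by (auto simp: heisenberg_frame_def)

lemma basis_table:
  assumes "a \<in> model_indices m k" "b \<in> model_indices m k"
  shows "br (basis a) (basis b) = (scale1 * bracket1 a b) *\<^sub>R basis Z1 + (scale2 * bracket2 a b) *\<^sub>R basis Z2"
proof -
  have "br (basis a) (basis b) = bracket1 a b *\<^sub>R z1 + bracket2 a b *\<^sub>R z2"
    using assms frame_brackets[OF frame1] ideal_splitting.frame_brackets[OF swap frame2]
      frame_central[OF frame1] ideal_splitting.frame_central[OF swap frame2]
      bracket_across bracket_across' frame_members
    by (elim model_indices_cases) (simp_all add: linear_scale[OF lin1] linear_scale[OF lin2])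
  moreover have "(scale1 * c) *\<^sub>R basis Z1 = c *\<^sub>R z1" "(scale2 * c) *\<^sub>R basis Z2 = c *\<^sub>R z2" for c
    using scales(1,2) by simp_all
  ultimately show ?thesis by (simp only:)
qed

lemma basis_dual_functional:
  assumes a: "a \<in> model_indices m k"
  shows "\<exists>\<phi> :: 'a \<Rightarrow> real. linear \<phi> \<and> \<phi> (basis a) \<noteq> 0 \<and>
           (\<forall>b\<in>model_indices m k. b \<noteq> a \<longrightarrow> \<phi> (basis b) = 0)"
  using a
proof (cases rule: model_indices_cases)
  case (x1 p)
  obtain \<phi> :: "'a \<Rightarrow> real" where \<phi>: "linear \<phi>" "\<phi> (xs p) = 1"
    "\<And>q. q < m \<Longrightarrow> q \<noteq> p \<Longrightarrow> \<phi> (xs q) = 0" "\<And>q. q < m \<Longrightarrow> \<phi> (ys q) = 0" "\<phi> z1 = 0"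
    "\<And>w. w \<in> J \<Longrightarrow> \<phi> w = 0"
    using frame_functional_x[OF frame1 x1(1)] by blast
  show ?thesis
  proof (intro exI[of _ \<phi>] conjI ballI impI)
    fix b assume "b \<in> model_indices m k" "b \<noteq> a"
    then show "\<phi> (basis b) = 0" using x1 \<phi> frame_members
      by (elim model_indices_cases) (simp_all add: linear_scale[OF \<phi>(1)])
  qed (use x1 \<phi> scales in simp_all)
next
  case (y1 p)
  obtain \<phi> :: "'a \<Rightarrow> real" where \<phi>: "linear \<phi>" "\<phi> (ys p) = 1"
    "\<And>q. q < m \<Longrightarrow> q \<noteq> p \<Longrightarrow> \<phi> (ys q) = 0" "\<And>q. q < m \<Longrightarrow> \<phi> (xs q) = 0" "\<phi> z1 = 0"
    "\<And>w. w \<in> J \<Longrightarrow> \<phi> w = 0"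
    using frame_functional_y[OF frame1 y1(1)] by blast
  show ?thesis
  proof (intro exI[of _ \<phi>] conjI ballI impI)
    fix b assume "b \<in> model_indices m k" "b \<noteq> a"
    then show "\<phi> (basis b) = 0" using y1 \<phi> frame_members
      by (elim model_indices_cases) (simp_all add: linear_scale[OF \<phi>(1)])
  qed (use y1 \<phi> scales in simp_all)
next
  case (x2 p)
  obtain \<phi> :: "'a \<Rightarrow> real" where \<phi>: "linear \<phi>" "\<phi> (us p) = 1"
    "\<And>q. q < k \<Longrightarrow> q \<noteq> p \<Longrightarrow> \<phi> (us q) = 0" "\<And>q. q < k \<Longrightarrow> \<phi> (vs q) = 0" "\<phi> z2 = 0"
    "\<And>w. w \<in> I \<Longrightarrow> \<phi> w = 0"
    using ideal_splitting.frame_functional_x[OF swap frame2 x2(1)] by blast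
  show ?thesis
  proof (intro exI[of _ \<phi>] conjI ballI impI)
    fix b assume "b \<in> model_indices m k" "b \<noteq> a"
    then show "\<phi> (basis b) = 0" using x2 \<phi> frame_members
      by (elim model_indices_cases) (simp_all add: linear_scale[OF \<phi>(1)])
  qed (use x2 \<phi> scales in simp_all)
next
  case (y2 p)
  obtain \<phi> :: "'a \<Rightarrow> real" where \<phi>: "linear \<phi>" "\<phi> (vs p) = 1"
    "\<And>q. q < k \<Longrightarrow> q \<noteq> p \<Longrightarrow> \<phi> (vs q) = 0" "\<And>q. q < k \<Longrightarrow> \<phi> (us q) = 0" "\<phi> z2 = 0"
    "\<And>w. w \<in> I \<Longrightarrow> \<phi> w = 0"
    using ideal_splitting.frame_functional_y[OF swap frame2 y2(1)] by blast
  show ?thesis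
  proof (intro exI[of _ \<phi>] conjI ballI impI)
    fix b assume "b \<in> model_indices m k" "b \<noteq> a"
    then show "\<phi> (basis b) = 0" using y2 \<phi> frame_members
      by (elim model_indices_cases) (simp_all add: linear_scale[OF \<phi>(1)])
  qed (use y2 \<phi> scales in simp_all)
next
  case z1
  obtain \<phi> :: "'a \<Rightarrow> real" where \<phi>: "linear \<phi>" "\<phi> z1 = 1" "\<And>w. w \<in> J \<Longrightarrow> \<phi> w = 0"
    "\<And>w. w \<in> I \<Longrightarrow> inner w z1 = 0 \<Longrightarrow> \<phi> w = 0"
    using centre_functional[OF frame_members(5) centres_nonzero(1)] by blast
  show ?thesis
  proof (intro exI[of _ \<phi>] conjI ballI impI)
    fix b assume "b \<in> model_indices m k" "b \<noteq> a"
    then show "\<phi> (basis b) = 0" using z1 \<phi> frame_members frame1 scales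
      by (elim model_indices_cases) (simp_all add: linear_scale[OF \<phi>(1)] heisenberg_frame_def)
  qed (use z1 \<phi> scales in \<open>simp_all add: linear_scale[OF \<phi>(1)]\<close>)
next
  case z2
  obtain \<phi> :: "'a \<Rightarrow> real" where \<phi>: "linear \<phi>" "\<phi> z2 = 1" "\<And>w. w \<in> I \<Longrightarrow> \<phi> w = 0"
    "\<And>w. w \<in> J \<Longrightarrow> inner w z2 = 0 \<Longrightarrow> \<phi> w = 0"
    using ideal_splitting.centre_functional[OF swap frame_members(6) centres_nonzero(2)] by blast
  show ?thesis
  proof (intro exI[of _ \<phi>] conjI ballI impI)
    fix b assume "b \<in> model_indices m k" "b \<noteq> a"
    then show "\<phi> (basis b) = 0" using z2 \<phi> frame_members frame2 scales
      by (elim model_indices_cases) (simp_all add: linear_scale[OF \<phi>(1)] heisenberg_frame_def)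
  qed (use z2 \<phi> scales in \<open>simp_all add: linear_scale[OF \<phi>(1)]\<close>)
qed

lemma basis_spans: "span (basis ` model_indices m k) = UNIV"
proof -
  let ?S = "span (basis ` model_indices m k)"
  have mem: "basis a \<in> ?S" if "a \<in> model_indices m k" for a
    using that by (intro span_base imageI)
  have "Z1 \<in> model_indices m k" "Z2 \<in> model_indices m k" by (simp_all add: model_indices_def)
  then have "z1 \<in> ?S" "z2 \<in> ?S"
    using span_scale[OF mem, of _ scale1] span_scale[OF mem, of _ scale2] scales(1,2) by force+
  moreover have "xs p \<in> ?S" "ys p \<in> ?S" if "p < m" for p
    using mem[of "X1 p"] mem[of "Y1 p"] that by (simp_all add: model_indices_def)
  moreover have "us p \<in> ?S" "vs p \<in> ?S" if "p < k" for p
    using mem[of "X2 p"] mem[of "Y2 p"] that by (simp_all add: model_indices_def)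
  ultimately have "insert z1 (xs ` {..<m} \<union> ys ` {..<m}) \<subseteq> ?S"
      "insert z2 (us ` {..<k} \<union> vs ` {..<k}) \<subseteq> ?S"
    by auto
  then have "span (insert z1 (xs ` {..<m} \<union> ys ` {..<m})) \<subseteq> ?S"
      "span (insert z2 (us ` {..<k} \<union> vs ` {..<k})) \<subseteq> ?S"
    by (simp_all add: span_minimal)
  then have "I \<subseteq> ?S" "J \<subseteq> ?S"
    using frame1 frame2 unfolding heisenberg_frame_def by blast+
  then have "x \<in> ?S" for x
    using covers[of x] span_add by blast
  then show ?thesis by blast
qed

theorem einstein: "einstein_nilradical br"
proof -
  have "inj_on basis (model_indices m k)" "independent (basis ` model_indices m k)"
    using independent_if_dual_functionals[OF finite_model_indices basis_dual_functional] by blast+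
  then show ?thesis
    using einstein_model[OF lin1 lin2 _ _ basis_spans scales(3,4) basis_table] by blast
qed

end

theorem mainTheorem15:
  fixes br :: "'a::euclidean_space \<Rightarrow> 'a \<Rightarrow> 'a" and q :: nat
  assumes "two_step_nilpotent br"
    and "lie_type br 2 q"
    and "derived_algebra br = lie_center br"
    and "\<not> einstein_nilradical br"
  shows "indecomposable br"
proof (rule ccontr)
  assume "\<not> indecomposable br"
  then obtain I J where ideals: "lie_ideal br I" "lie_ideal br J" and nonzero: "I \<noteq> {0}" "J \<noteq> {0}"
    and disjoint: "I \<inter> J = {0}" and sum: "{x + y | x y. x \<in> I \<and> y \<in> J} = UNIV"
    unfolding indecomposable_def by blast
  have "lie_algebra br" using assms(1) by (simp add: two_step_nilpotent_def)
  then have split: "ideal_splitting br I J"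
    using ideals disjoint sum by unfold_locales blast+
  have dim2: "dim (derived_algebra br) = 2" using assms(2) by (simp add: lie_type_def)
  obtain z1 m xs ys where frame1: "heisenberg_frame br I z1 m xs ys"
    using ideal_splitting.heisenberg_frame_of_ideal[OF split assms(3) dim2 nonzero] by blast
  obtain z2 k us vs where frame2: "heisenberg_frame br J z2 k us vs"
    using ideal_splitting.heisenberg_frame_of_ideal[OF ideal_splitting.swap[OF split] assms(3) dim2
        nonzero(2,1)] by blast
  have "einstein_nilradical br"
    using two_frames.einstein[OF two_frames.intro[OF split two_frames_axioms.intro[OF frame1 frame2]]] .
  then show False using assms(4) by contradiction
qed

end
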